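(* $h:=\int_{\Sigma\times\mathbb{R}\times[0,1)}g(\mathbf{j},y,x)\,d\mu(\mathbf{j},y,x)<\infty$.
   Context: $b\ge2$ integer, $\gamma\in(0,1)$, $\phi$ a $\mathbb{Z}$-periodic Lipschitz function. $\Lambda=\{0,\dots,b-1\}$, $\Sigma=\Lambda^{\mathbb{Z}_+}$, $\nu$ uniform on $\Lambda$. $S(x,\mathbf{j})=\sum_{n\ge1}\gamma^{n-1}\phi\big(\frac{x+j_1+j_2b+\cdots+j_nb^{n-1}}{b^n}\big)$. $\mu$ is the image of $\nu^{\mathbb{Z}_+}\times$Lebesgue (on $[0,1)$) under $\Pi(\mathbf{j},x)=(\mathbf{j},S(x,\mathbf{j}),x)$, a probability on $\Sigma\times\mathbb{R}\times[0,1)$. Let $\{\mu_{(\mathbf{j},y,x)}\}$ be the (Rokhlin) system of conditional measures of $\mu$ with respect to the measurable partition $\zeta=\{\Sigma\times\{y\}\times\{x\}:y\in\mathbb{R},x\in[0,1)\}$. Define $g(\mathbf{j},y,x)=-\log\mu_{(\mathbf{j},y,x)}\big([j_1]\times\mathbb{R}\times[0,1)\big)$, where $[j_1]$ is the cylinder of sequences with first symbol $j_1$. *)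

theory Defs
  imports "HOL-Probability.Probability"
begin

text \<open>A sequence (j_1, j_2, ...) is represented
  by j :: nat => nat with j_n = j (n - 1), i.e. j 0 is the first symbol j_1.\<close>
definition Sigma_meas :: "nat \<Rightarrow> (nat \<Rightarrow> nat) measure" where
  "Sigma_meas b = (\<Pi>\<^sub>M i\<in>(UNIV::nat set). uniform_count_measure {..<b})"

text \<open>S(x,j) = sum_{n>=1} gamma^(n-1) phi((x + j_1 + j_2 b + ... + j_n b^(n-1)) / b^n),
  written with 0-based indices.\<close>
definition S_fun :: "nat \<Rightarrow> real \<Rightarrow> (real \<Rightarrow> real) \<Rightarrow> real \<Rightarrow> (nat \<Rightarrow> nat) \<Rightarrow> real" where
  "S_fun b \<gamma> \<phi> x j =
     (\<Sum>n. \<gamma> ^ n * \<phi> ((x + (\<Sum>k<Suc n. real (j k) * real b ^ k)) / real b ^ Suc n))"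

definition base_meas :: "nat \<Rightarrow> ((nat \<Rightarrow> nat) \<times> real) measure" where
  "base_meas b = Sigma_meas b \<Otimes>\<^sub>M restrict_space lborel {0..<1::real}"

definition target_space :: "nat \<Rightarrow> ((nat \<Rightarrow> nat) \<times> real \<times> real) measure" where
  "target_space b = Sigma_meas b \<Otimes>\<^sub>M (borel \<Otimes>\<^sub>M restrict_space borel {0..<1::real})"

definition mu_meas :: "nat \<Rightarrow> real \<Rightarrow> (real \<Rightarrow> real) \<Rightarrow> ((nat \<Rightarrow> nat) \<times> real \<times> real) measure" where
  "mu_meas b \<gamma> \<phi> = distr (base_meas b) (target_space b) (\<lambda>(j, x). (j, S_fun b \<gamma> \<phi> x j, x))"

text \<open>Rokhlin system of conditional measures of M with respect to the measurable
  partition whose elements are the fibres {w. snd w = c} (here: Sigma x {y} x {x}).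
  K w is the conditional measure on the partition element containing w; it depends
  only on that element, is (for a.e. w) a probability measure on M's sigma-algebra
  concentrated on that element, w |-> K w A is measurable (w.r.t. the completion,
  as in Rokhlin's theory of Lebesgue spaces), and M(A) = int K w (A) dM(w).\<close>
definition cond_measure_system :: "('a \<times> 'b) measure \<Rightarrow> ('a \<times> 'b \<Rightarrow> ('a \<times> 'b) measure) \<Rightarrow> bool" where
  "cond_measure_system M K \<longleftrightarrow>
     (\<forall>w w'. snd w = snd w' \<longrightarrow> K w = K w') \<and>
     (AE w in M. prob_space (K w) \<and> sets (K w) = sets M \<and>
        emeasure (K w) {w' \<in> space M. snd w' = snd w} = 1) \<and>
     (\<forall>A \<in> sets M. (\<lambda>w. emeasure (K w) A) \<in> borel_measurable (completion M) \<and>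
        emeasure M A = (\<integral>\<^sup>+ w. emeasure (K w) A \<partial>completion M))"

definition neglog :: "real \<Rightarrow> ennreal" where
  "neglog p = (if p \<le> 0 then \<infinity> else ennreal (- ln p))"

definition g_fun :: "nat \<Rightarrow> ((nat \<Rightarrow> nat) \<times> real \<times> real \<Rightarrow> ((nat \<Rightarrow> nat) \<times> real \<times> real) measure)
     \<Rightarrow> (nat \<Rightarrow> nat) \<times> real \<times> real \<Rightarrow> ennreal" where
  "g_fun b K w = neglog (measure (K w) {w' \<in> space (target_space b). fst w' 0 = fst w 0})"

end

theory Submission
  imports Defs
begin

text \<open>Write \<open>p w\<close> for the conditional measure of the cylinder \<open>[j\<^sub>1]\<close> containing \<open>w\<close>.
  As \<open>p\<close> is constant on the fibres of \<open>\<zeta>\<close>, so are its level sets, and disintegrating \<open>\<mu>\<close>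
  over the fibres gives \<open>\<mu>([i] \<inter> {p \<le> t}) = \<integral>\<^bsub>{p \<le> t}\<^esub> \<mu>\<^sub>w[i] d\<mu>(w) \<le> t\<close>.  Since
  \<open>-log p\<close> is at most the number of \<open>k\<close> with \<open>p \<le> 2\<^sup>-\<^sup>k\<close>, each of the \<open>b\<close> cylinders
  contributes at most \<open>\<Sum>\<^sub>k 2\<^sup>-\<^sup>k = 2\<close>, so \<open>h \<le> 2b\<close>.  Only the finiteness of the partition
  into cylinders matters.\<close>

lemma of_nat_le_suminf_indicator_halves:
  fixes q :: real
  assumes "q \<le> (1/2) ^ m"
  shows "of_nat (Suc m) \<le> (\<Sum>k. indicator {..(1/2) ^ k} q :: ennreal)"
proof -
  have "q \<le> (1/2) ^ k" if "k \<le> m" for k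
    by (rule order_trans[OF assms power_decreasing]) (use that in auto)
  then have "(\<Sum>k<Suc m. indicator {..(1/2::real) ^ k} q :: ennreal) = of_nat (Suc m)"
    by (simp add: indicator_def)
  moreover have "(\<Sum>k<Suc m. indicator {..(1/2::real) ^ k} q :: ennreal)
      \<le> (\<Sum>k. indicator {..(1/2) ^ k} q)"
    by (intro sum_le_suminf) auto
  ultimately show ?thesis by simp
qed

lemma ennreal_eq_top_if_of_nat_le:
  fixes x :: ennreal
  assumes "\<And>n. of_nat n \<le> x"
  shows "x = \<infinity>"
proof (rule ccontr)
  assume "x \<noteq> \<infinity>"
  then obtain n where "x < of_nat n" using ennreal_Ex_less_of_nat by (auto simp: less_top)
  then show False using assms[of n] by simp
qed

lemma neglog_le_suminf_indicator_halves:
  fixes q :: real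
  assumes "0 \<le> q"
  shows "neglog q \<le> (\<Sum>k. indicator {..(1/2) ^ k} q :: ennreal)"
proof -
  consider "q = 0" | "1 \<le> q" | "0 < q" "q < 1" using assms by linarith
  then show ?thesis
  proof cases
    case 1
    have "of_nat n \<le> (\<Sum>k. indicator {..(1/2::real) ^ k} q :: ennreal)" for n
    proof -
      have "of_nat n \<le> (of_nat (Suc n) :: ennreal)" by simp
      also have "\<dots> \<le> (\<Sum>k. indicator {..(1/2::real) ^ k} q)"
        using 1 by (intro of_nat_le_suminf_indicator_halves) simp
      finally show ?thesis .
    qed
    then have "(\<Sum>k. indicator {..(1/2::real) ^ k} q :: ennreal) = \<infinity>"
      by (rule ennreal_eq_top_if_of_nat_le)
    then show ?thesis by simp
  next
    case 2
    then have "neglog q = 0" by (simp add: neglog_def ennreal_eq_0_iff)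
    then show ?thesis by simp
  next
    case 3
    define m where "m = nat \<lfloor>log 2 (1 / q)\<rfloor>"
    have "0 < log 2 (1 / q)" using 3 by simp
    then have m_floor: "real m = of_int \<lfloor>log 2 (1 / q)\<rfloor>" by (simp add: m_def)
    have "q \<le> (1/2) ^ m"
    proof -
      have "real m \<le> log 2 (1 / q)" using m_floor by linarith
      then have "2 ^ m \<le> 1 / q"
        using 3 powr_mono[of "real m" "log 2 (1 / q)" 2] by (simp add: powr_realpow)
      then show ?thesis using 3 by (simp add: power_one_over le_divide_eq mult.commute)
    qed
    then have count: "of_nat (Suc m) \<le> (\<Sum>k. indicator {..(1/2::real) ^ k} q :: ennreal)"
      by (rule of_nat_le_suminf_indicator_halves)
    have "- ln q = ln 2 * log 2 (1 / q)" using 3 by (simp add: log_def ln_div)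
    also have "\<dots> \<le> log 2 (1 / q)"
      using \<open>0 < log 2 (1 / q)\<close> ln_2_less_1 by (simp add: mult_le_cancel_right1)
    also have "\<dots> \<le> real (Suc m)" using m_floor by linarith
    finally have "ennreal (- ln q) \<le> ennreal (real (Suc m))" by (rule ennreal_leI)
    then have "neglog q \<le> of_nat (Suc m)"
      using 3 by (simp only: neglog_def ennreal_of_nat_eq_real_of_nat) simp
    then show ?thesis using count by (rule order_trans)
  qed
qed

lemma neglog_measurable [measurable]: "neglog \<in> borel_measurable borel"
  unfolding neglog_def by measurable

text \<open>No measurability of \<open>f\<close> is required (so that of \<open>S_fun\<close> is never needed):
  \<open>measure_of\<close> yields either the set function \<open>A \<mapsto> M(f\<^sup>-\<^sup>1 A)\<close> or the null measure.\<close>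

lemma emeasure_distr_le_space: "emeasure (distr M N f) A \<le> emeasure M (space M)"
  unfolding distr_def emeasure_measure_of_conv
  using emeasure_space[of M] by auto

lemma borel_measurable_cond_measure_system_emeasure:
  assumes "cond_measure_system M K" and "A \<in> sets M"
  shows "(\<lambda>w. emeasure (K w) A) \<in> borel_measurable (completion M)"
  using assms unfolding cond_measure_system_def by blast

lemma borel_measurable_neglog_cond_measure:
  assumes "cond_measure_system M K" and "C \<in> sets M"
  shows "(\<lambda>w. indicator C w * neglog (measure (K w) C)) \<in> borel_measurable (completion M)"
proof -
  note [measurable] = borel_measurable_cond_measure_system_emeasure[OF assms]
  have [measurable]: "C \<in> sets (completion M)" using assms(2) by simp
  show ?thesis unfolding measure_def by measurable
qed

lemma cond_measure_system_AE_prob_space: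
  assumes "cond_measure_system M K"
  shows "AE w in completion M.
    prob_space (K w) \<and> sets (K w) = sets M \<and> (AE w' in K w. snd w' = snd w)"
proof -
  have "AE w in M. prob_space (K w) \<and> sets (K w) = sets M \<and>
      emeasure (K w) {w' \<in> space M. snd w' = snd w} = 1"
    using assms unfolding cond_measure_system_def by blast
  then have "AE w in M. prob_space (K w) \<and> sets (K w) = sets M \<and> (AE w' in K w. snd w' = snd w)"
  proof eventually_elim
    case (elim w)
    then interpret prob_space "K w" by simp
    have "prob {w' \<in> space M. snd w' = snd w} = 1"
      using elim by (simp add: measure_def)
    then have "AE w' in K w. w' \<in> {w' \<in> space M. snd w' = snd w}"
      by (rule AE_prob_1)
    then have "AE w' in K w. snd w' = snd w"
      by eventually_elim simp
    then show ?case using elim by simp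
  qed
  then show ?thesis by (rule AE_completion)
qed

lemma cond_measure_system_AE_null_sets:
  assumes K: "cond_measure_system M K" and N: "N \<in> null_sets M"
  shows "AE w in completion M. N \<in> null_sets (K w)"
proof -
  have "(\<integral>\<^sup>+ w. emeasure (K w) N \<partial>completion M) = emeasure M N"
    using K N unfolding cond_measure_system_def by auto
  then have "AE w in completion M. emeasure (K w) N = 0"
    using N borel_measurable_cond_measure_system_emeasure[OF K null_setsD2[OF N]]
    by (auto simp: nn_integral_0_iff_AE[symmetric])
  with cond_measure_system_AE_prob_space[OF K] show ?thesis
    by eventually_elim (use N in \<open>auto simp: null_sets_def\<close>)
qed

text \<open>A completion-measurable union of fibres \<open>B\<close> has, for almost every \<open>w\<close>, conditional
  measure 1 or 0 according to whether \<open>w \<in> B\<close>.\<close>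

lemma cond_measure_system_emeasure_Int_saturated:
  assumes K: "cond_measure_system M K"
    and A: "A \<in> sets M" and B: "B \<in> sets (completion M)"
    and saturated: "\<And>w w'. w \<in> B \<Longrightarrow> w' \<in> space M \<Longrightarrow> snd w' = snd w \<Longrightarrow> w' \<in> B"
  shows "emeasure (completion M) (A \<inter> B) = (\<integral>\<^sup>+ w. indicator B w * emeasure (K w) A \<partial>completion M)"
proof -
  obtain S N N' where B_eq: "B = S \<union> N" and "N \<subseteq> N'" and N': "N' \<in> null_sets M"
    and S: "S \<in> sets M"
    using B by (rule sets_completionE)
  have AE_not_N': "AE w in completion M. w \<notin> N'"
    using N' by (intro AE_not_in null_sets_completionI)
  have "emeasure (completion M) (A \<inter> B) = emeasure (completion M) (A \<inter> S)"
  proof (rule emeasure_eq_AE)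
    show "AE w in completion M. (w \<in> A \<inter> B) = (w \<in> A \<inter> S)"
      using AE_not_N' by eventually_elim (use B_eq \<open>N \<subseteq> N'\<close> in auto)
  qed (use A B S in auto)
  also have "\<dots> = (\<integral>\<^sup>+ w. emeasure (K w) (A \<inter> S) \<partial>completion M)"
    using K A S unfolding cond_measure_system_def by auto
  also have "\<dots> = (\<integral>\<^sup>+ w. indicator B w * emeasure (K w) A \<partial>completion M)"
  proof (rule nn_integral_cong_AE)
    show "AE w in completion M. emeasure (K w) (A \<inter> S) = indicator B w * emeasure (K w) A"
      using cond_measure_system_AE_prob_space[OF K] cond_measure_system_AE_null_sets[OF K N']
        AE_space[of "completion M"]
    proof eventually_elim
      case (elim w)
      then have w_space: "w \<in> space M" by simp
      from elim have "AE w' in K w. w' \<notin> N' \<and> snd w' = snd w \<and> w' \<in> space M"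
        using AE_not_in[of N' "K w"] AE_space[of "K w"] sets_eq_imp_space_eq[of "K w" M]
        by (auto elim!: AE_mp)
      then have "AE w' in K w. (w' \<in> A \<inter> S) = (w' \<in> (if w \<in> B then A else {}))"
      proof eventually_elim
        case (elim w')
        then have "w' \<in> B \<longleftrightarrow> w \<in> B"
          using saturated[of w' w] saturated[of w w'] w_space by auto
        then show ?case using elim B_eq \<open>N \<subseteq> N'\<close> by auto
      qed
      then have "emeasure (K w) (A \<inter> S) = emeasure (K w) (if w \<in> B then A else {})"
        using elim A S by (intro emeasure_eq_AE) auto
      then show ?case by simp
    qed
  qed
  finally show ?thesis .
qed

lemma emeasure_Int_cond_measure_level_set_le:
  assumes K: "cond_measure_system M K"
    and M_le_1: "emeasure M (space M) \<le> 1" and C: "C \<in> sets M" and "0 \<le> t"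
  shows "emeasure (completion M) (C \<inter> {w \<in> space M. measure (K w) C \<le> t}) \<le> ennreal t"
proof -
  define B where "B = {w \<in> space M. measure (K w) C \<le> t}"
  note [measurable] = borel_measurable_cond_measure_system_emeasure[OF K C]
  have "{w \<in> space (completion M). enn2real (emeasure (K w) C) \<le> t} \<in> sets (completion M)"
    by measurable
  then have B_sets: "B \<in> sets (completion M)" by (simp add: B_def measure_def)
  have "emeasure (completion M) (C \<inter> B) = (\<integral>\<^sup>+ w. indicator B w * emeasure (K w) C \<partial>completion M)"
  proof (rule cond_measure_system_emeasure_Int_saturated[OF K C B_sets])
    fix w w' assume "w \<in> B" "w' \<in> space M" "snd w' = snd w"
    moreover have "K w' = K w"
      using K \<open>snd w' = snd w\<close> unfolding cond_measure_system_def by blast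
    ultimately show "w' \<in> B" by (simp add: B_def)
  qed
  also have "\<dots> \<le> (\<integral>\<^sup>+ w. ennreal t \<partial>completion M)"
  proof (rule nn_integral_mono_AE)
    show "AE w in completion M. indicator B w * emeasure (K w) C \<le> ennreal t"
      using cond_measure_system_AE_prob_space[OF K]
    proof eventually_elim
      case (elim w)
      then interpret prob_space "K w" by simp
      show ?case
        using C elim by (auto simp: B_def indicator_def emeasure_eq_measure ennreal_leI)
    qed
  qed
  also have "\<dots> = ennreal t * emeasure M (space M)" by simp
  also have "\<dots> \<le> ennreal t"
    using mult_left_mono[OF M_le_1, of "ennreal t"] by simp
  finally show ?thesis by (simp add: B_def)
qed

lemma nn_integral_neglog_cond_measure_le_2:
  assumes K: "cond_measure_system M K"
    and M_le_1: "emeasure M (space M) \<le> 1" and C: "C \<in> sets M"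
  shows "(\<integral>\<^sup>+ w. indicator C w * neglog (measure (K w) C) \<partial>completion M) \<le> 2"
proof -
  define B where "B k = {w \<in> space M. measure (K w) C \<le> (1/2) ^ k}" for k :: nat
  note [measurable] = borel_measurable_cond_measure_system_emeasure[OF K C]
  have "{w \<in> space (completion M). enn2real (emeasure (K w) C) \<le> (1/2) ^ k} \<in> sets (completion M)"
    for k by measurable
  then have C_Int_B_sets: "C \<inter> B k \<in> sets (completion M)" for k
    using C by (intro sets.Int) (auto simp: B_def measure_def)
  have "(\<integral>\<^sup>+ w. indicator C w * neglog (measure (K w) C) \<partial>completion M)
      \<le> (\<integral>\<^sup>+ w. (\<Sum>k. indicator (C \<inter> B k) w) \<partial>completion M)"
  proof (rule nn_integral_mono)
    fix w assume "w \<in> space (completion M)"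
    then have "indicator (C \<inter> B k) w
        = indicator C w * (indicator {..(1/2::real) ^ k} (measure (K w) C) :: ennreal)" for k
      by (simp add: B_def indicator_def)
    then show "indicator C w * neglog (measure (K w) C) \<le> (\<Sum>k. indicator (C \<inter> B k) w)"
      using neglog_le_suminf_indicator_halves[of "measure (K w) C"]
      by (simp add: ennreal_suminf_cmult mult_left_mono)
  qed
  also have "\<dots> = (\<Sum>k. emeasure (completion M) (C \<inter> B k))"
    using C_Int_B_sets by (subst nn_integral_suminf) auto
  also have "\<dots> \<le> (\<Sum>k. ennreal ((1/2) ^ k))"
    using emeasure_Int_cond_measure_level_set_le[OF K M_le_1 C]
    by (intro suminf_le) (auto simp: B_def)
  also have "\<dots> = 2"
    using geometric_sums[of "1/2::real"] by (subst suminf_ennreal_eq) auto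
  finally show ?thesis .
qed

lemma emeasure_mu_meas_le_1:
  assumes "0 < b"
  shows "emeasure (mu_meas b \<gamma> \<phi>) A \<le> 1"
proof -
  have "prob_space (base_meas b)"
    unfolding base_meas_def Sigma_meas_def using assms
    by (intro prob_space_pair prob_space_PiM prob_space_uniform_count_measure
        prob_space_restrict_space) auto
  then show ?thesis
    using emeasure_distr_le_space[of "base_meas b"]
    by (simp add: mu_meas_def prob_space.emeasure_space_1)
qed

lemma first_symbol_less: "w \<in> space (target_space b) \<Longrightarrow> fst w 0 < b"
  by (auto simp: target_space_def Sigma_meas_def space_pair_measure space_PiM
      space_uniform_count_measure)

lemma first_symbol_cylinder_sets:
  assumes "i < b"
  shows "{w \<in> space (target_space b). fst w 0 = i} \<in> sets (target_space b)"
proof -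
  have "(\<lambda>w. fst w 0) \<in> measurable (target_space b) (uniform_count_measure {..<b})"
    unfolding target_space_def Sigma_meas_def
    by (rule measurable_compose[OF measurable_fst measurable_component_singleton]) simp
  then have "(\<lambda>w. fst w 0) -` {i} \<inter> space (target_space b) \<in> sets (target_space b)"
    by (rule measurable_sets) (use assms in \<open>simp add: sets_uniform_count_measure\<close>)
  then show ?thesis by (simp add: vimage_def Int_def conj_commute)
qed

theorem lemma9p3:
  fixes b :: nat and \<gamma> :: real and \<phi> :: "real \<Rightarrow> real"
    and K :: "(nat \<Rightarrow> nat) \<times> real \<times> real \<Rightarrow> ((nat \<Rightarrow> nat) \<times> real \<times> real) measure"
  assumes "b \<ge> 2"
    and "0 < \<gamma>" and "\<gamma> < 1"
    and "\<And>t. \<phi> (t + 1) = \<phi> t"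
    and "\<exists>L. L-lipschitz_on UNIV \<phi>"
    and "cond_measure_system (mu_meas b \<gamma> \<phi>) K"
  shows "(\<integral>\<^sup>+ w. g_fun b K w \<partial>completion (mu_meas b \<gamma> \<phi>)) < \<infinity>"
proof -
  let ?M = "mu_meas b \<gamma> \<phi>"
  note K = \<open>cond_measure_system ?M K\<close>
  define C where "C i = {w \<in> space (target_space b). fst w 0 = i}" for i
  define f where "f i w = indicator (C i) w * neglog (measure (K w) (C i))" for i w
  have C_sets: "C i \<in> sets ?M" if "i < b" for i
    using first_symbol_cylinder_sets[OF that] by (simp add: C_def mu_meas_def)
  have "g_fun b K w \<le> (\<Sum>i<b. f i w)" if "w \<in> space (completion ?M)" for w
  proof -
    have "w \<in> space (target_space b)" using that by (simp add: mu_meas_def)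
    then have "g_fun b K w = f (fst w 0) w" and "fst w 0 < b"
      by (simp_all add: g_fun_def f_def C_def first_symbol_less)
    then show ?thesis using member_le_sum[of "fst w 0" "{..<b}" "\<lambda>i. f i w"] by simp
  qed
  then have "(\<integral>\<^sup>+ w. g_fun b K w \<partial>completion ?M) \<le> (\<integral>\<^sup>+ w. (\<Sum>i<b. f i w) \<partial>completion ?M)"
    by (rule nn_integral_mono)
  also have "\<dots> = (\<Sum>i<b. \<integral>\<^sup>+ w. f i w \<partial>completion ?M)"
    using borel_measurable_neglog_cond_measure[OF K C_sets]
    by (intro nn_integral_sum) (auto simp: f_def)
  also have "\<dots> \<le> (\<Sum>i<b. 2)"
    using nn_integral_neglog_cond_measure_le_2[OF K emeasure_mu_meas_le_1 C_sets] \<open>b \<ge> 2\<close>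
    by (intro sum_mono) (simp add: f_def)
  finally have "(\<integral>\<^sup>+ w. g_fun b K w \<partial>completion ?M) \<le> (\<Sum>i<b. 2)" .
  moreover have "(\<Sum>i<b. 2) < (\<infinity> :: ennreal)"
    by (simp add: ennreal_of_nat_eq_real_of_nat ennreal_mult_less_top)
  ultimately show ?thesis by (rule le_less_trans)
qed

end
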